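(* Let $X\subseteq\mathbb{R}^n$ be nonempty, compact and convex, $F:X\to\mathbb{R}^n$ Lipschitz continuous and monotone, $f$ $L$-smooth on $X$ (possibly nonconvex), and $0<\hat\gamma\le\frac1L$. Let $X^*_F=\mathrm{SOL}(X,F)$, and let $\{\hat x_k\}\subseteq X$ be the outer iterates generated by the IPR-EG method described in the context. Then for all $k\ge0$, $\frac{\hat\gamma^2}{2}\|G_{1/\hat\gamma}(\hat x_k)\|^2\le\|\hat x_{k+1}-\hat x_k\|^2+\|\delta_k\|^2$.
   Context: $\mathrm{SOL}(X,F)=\{x\in X: F(x)^\top(y-x)\ge0\ \forall y\in X\}$, $\Pi_Y$ Euclidean projection. Residual mapping: $G_{1/\hat\gamma}(x)=\frac1{\hat\gamma}\left(x-\Pi_{X^*_F}[x-\hat\gamma\nabla f(x)]\right)$. IPR-EG: given $\hat x_0\in X$, outer stepsize $\hat\gamma$, inner stepsize $\gamma>0$, regularization parameters $\eta_k>0$ and inner iteration counts $T_k$, at outer iteration $k$ set $z_k=\hat x_k-\hat\gamma\nabla f(\hat x_k)$ and run $T_k$ steps of the weighted-average regularized extragradient scheme $y_{k,t+1}=\Pi_X[x_{k,t}-\gamma(F(x_{k,t})+\eta_k(x_{k,t}-z_k))]$, $x_{k,t+1}=\Pi_X[x_{k,t}-\gamma(F(y_{k,t+1})+\eta_k(y_{k,t+1}-z_k))]$, $\bar y_{k,t+1}=(\Gamma_{k,t}\bar y_{k,t}+\theta_{k,t}y_{k,t+1})/\Gamma_{k,t+1}$ with $\Gamma_{k,0}=0$,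 $\Gamma_{k,t+1}=\Gamma_{k,t}+\theta_{k,t}$, $\theta_{k,0}=\frac1{1-0.5\gamma\eta_k}$, $\theta_{k,t+1}=\frac{\theta_{k,t}}{1-0.5\gamma\eta_k}$; then set $\hat x_{k+1}=\bar y_{k,T_k}$ and $x_{k+1,0}=\bar y_{k+1,0}=\bar y_{k,T_k}$ (with $x_{0,0},\bar y_{0,0}\in X$ given). Define $\delta_k=\hat x_{k+1}-\Pi_{X^*_F}[z_k]$. *)

theory Defs
  imports "HOL-Analysis.Analysis"
begin

definition SOL :: "'a::euclidean_space set \<Rightarrow> ('a \<Rightarrow> 'a) \<Rightarrow> 'a set" where
  "SOL X F = {x \<in> X. \<forall>y\<in>X. inner (F x) (y - x) \<ge> 0}"

abbreviation proj :: "'a::euclidean_space set \<Rightarrow> 'a \<Rightarrow> 'a" where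
  "proj Y x \<equiv> closest_point Y x"

definition residual :: "'a::euclidean_space set \<Rightarrow> ('a \<Rightarrow> 'a) \<Rightarrow> real \<Rightarrow> 'a \<Rightarrow> 'a" where
  "residual XF gradf gh x = (1 / gh) *\<^sub>R (x - proj XF (x - gh *\<^sub>R gradf x))"

end

theory Submission
  imports Defs
begin

(* gh times the residual at xh k equals xh k - proj (SOL X F) (z k), which is the difference
   (xh (k+1) - proj (SOL X F) (z k)) - (xh (k+1) - xh k); the bound is then
   |b - a|^2 <= 2 (|a|^2 + |b|^2). It holds for any next iterate. *)

lemma power2_norm_diff_le:
  fixes a b :: "'a::real_normed_vector"
  shows "(norm (b - a))\<^sup>2 \<le> 2 * ((norm a)\<^sup>2 + (norm b)\<^sup>2)"
proof -
  have "norm (b - a) \<le> norm a + norm b"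
    by (metis add.commute norm_triangle_ineq4)
  then have "(norm (b - a))\<^sup>2 \<le> (norm a + norm b)\<^sup>2"
    by (simp add: power_mono)
  also have "\<dots> \<le> 2 * ((norm a)\<^sup>2 + (norm b)\<^sup>2)"
    using sum_squares_bound[of "norm a" "norm b"] by (simp add: power2_sum)
  finally show ?thesis .
qed

lemma scaleR_residual:
  assumes "gh \<noteq> 0"
  shows "gh *\<^sub>R residual XF gradf gh u = u - proj XF (u - gh *\<^sub>R gradf u)"
  using assms by (simp add: residual_def)

lemma norm_residual_le:
  assumes "gh > 0"
  shows "gh\<^sup>2 / 2 * (norm (residual XF gradf gh u))\<^sup>2
           \<le> (norm (v - u))\<^sup>2 + (norm (v - proj XF (u - gh *\<^sub>R gradf u)))\<^sup>2"
proof -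
  let ?p = "proj XF (u - gh *\<^sub>R gradf u)"
  have "gh\<^sup>2 * (norm (residual XF gradf gh u))\<^sup>2 = (norm (gh *\<^sub>R residual XF gradf gh u))\<^sup>2"
    using assms by (simp add: power_mult_distrib)
  also have "\<dots> = (norm ((v - ?p) - (v - u)))\<^sup>2"
    using assms by (simp add: scaleR_residual)
  also have "\<dots> \<le> 2 * ((norm (v - u))\<^sup>2 + (norm (v - ?p))\<^sup>2)"
    by (rule power2_norm_diff_le)
  finally show ?thesis by simp
qed

theorem lemma5p5:
  fixes X :: "'a::euclidean_space set"
    and F :: "'a \<Rightarrow> 'a"
    and f :: "'a \<Rightarrow> real" and gradf :: "'a \<Rightarrow> 'a"
    and L gh g :: real
    and eta :: "nat \<Rightarrow> real" and T :: "nat \<Rightarrow> nat"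
    and xh z :: "nat \<Rightarrow> 'a"
    and x y ybar :: "nat \<Rightarrow> nat \<Rightarrow> 'a"
    and Gam theta :: "nat \<Rightarrow> nat \<Rightarrow> real"
  assumes X_ne: "X \<noteq> {}" and X_compact: "compact X" and X_convex: "convex X"
    and F_lip: "\<exists>C. C-lipschitz_on X F"
    and F_mono: "\<forall>u\<in>X. \<forall>v\<in>X. inner (F u - F v) (u - v) \<ge> 0"
    and L_pos: "L > 0"
    and f_diff: "\<forall>u\<in>X. (f has_derivative (\<lambda>h. inner (gradf u) h)) (at u)"
    and gradf_lip: "\<forall>u\<in>X. \<forall>v\<in>X. norm (gradf u - gradf v) \<le> L * norm (u - v)"
    and gh_pos: "0 < gh" and gh_le: "gh \<le> 1 / L"
    and g_pos: "g > 0"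
    and eta_pos: "\<forall>k. eta k > 0"
    and xh0: "xh 0 \<in> X" and x00: "x 0 0 \<in> X" and ybar00: "ybar 0 0 \<in> X"
    and z_def: "\<forall>k. z k = xh k - gh *\<^sub>R gradf (xh k)"
    and y_step: "\<forall>k t. y k (Suc t) =
          proj X (x k t - g *\<^sub>R (F (x k t) + eta k *\<^sub>R (x k t - z k)))"
    and x_step: "\<forall>k t. x k (Suc t) =
          proj X (x k t - g *\<^sub>R (F (y k (Suc t)) + eta k *\<^sub>R (y k (Suc t) - z k)))"
    and Gam0: "\<forall>k. Gam k 0 = 0"
    and GamS: "\<forall>k t. Gam k (Suc t) = Gam k t + theta k t"
    and theta0: "\<forall>k. theta k 0 = 1 / (1 - 0.5 * g * eta k)"
    and thetaS: "\<forall>k t. theta k (Suc t) = theta k t / (1 - 0.5 * g * eta k)"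
    and ybar_step: "\<forall>k t. ybar k (Suc t) =
          (1 / Gam k (Suc t)) *\<^sub>R (Gam k t *\<^sub>R ybar k t + theta k t *\<^sub>R y k (Suc t))"
    and xh_next: "\<forall>k. xh (Suc k) = ybar k (T k)"
    and x_next: "\<forall>k. x (Suc k) 0 = ybar k (T k)"
    and ybar_next: "\<forall>k. ybar (Suc k) 0 = ybar k (T k)"
    and xh_in_X: "\<forall>k. xh k \<in> X"
  shows "\<forall>k. gh\<^sup>2 / 2 * (norm (residual (SOL X F) gradf gh (xh k)))\<^sup>2
           \<le> (norm (xh (Suc k) - xh k))\<^sup>2
              + (norm (xh (Suc k) - proj (SOL X F) (z k)))\<^sup>2"
  using norm_residual_le[OF gh_pos] z_def by auto

end
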